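(* Let $G$ be a digraph and $v\to w\in E(G)$. Then $v\to w$ is disimplicial in $G$ if and only if $(\mathrm{repr}(\mathrm{out}(v)),\mathrm{repr}(\mathrm{in}(w)))$ is a vertex of $\mathrm{Join}(\mathrm{Repr}(\mathrm{Split}(G)))$ and this vertex is transitive there.
   Context: A digraph is a finite vertex set $V$ with arc set $E\subseteq V\times V$. $N^+(v),N^-(v)$ denote out-/in-neighborhoods, $N(v)=N^+(v)\cup N^-(v)$, $d(v)=|N(v)|$. Source: $N^-(v)=\emptyset$; sink: $N^+(v)=\emptyset$; ST graph: every vertex is a source or a sink. An arc $v\to w$ is disimplicial if $x\to y$ is an arc for all $x\in N^-(w)$, $y\in N^+(v)$; a vertex $u$ is transitive if $x\to y$ is an arc for all $x\in N^-(u)$, $y\in N^+(u)$. $\mathrm{Split}(G)$ is the ST graph with a vertex $\mathrm{out}(v)$ for each non-sink $v$ of $G$ and a vertex $\mathrm{in}(w)$ for each non-source $w$ (all distinct), $\mathrm{out}(v)\to\mathrm{in}(w)$ an arc iff $v\to w\in E(G)$, no other arcs. In an ST graph $H$, vertices with equal $N(\cdot)$ are twins; twin blocks are the classes of this equivalence; $\mathrm{repr}$ picks one vertex of each block ($\mathrm{repr}(u)$ is the chosen vertex of $u$'s block), and $\mathrm{Repr}(H)$ is the subdigraph induced by the chosen vertices. In a digraph $H$, the thin neighbor $\theta(u)$ of $u$ is the unique $x\in N(u)$ with $d(x)<d(z)$ for all $z\in N(u)\setminus\{x\}$ (undefined if no such $x$); an arc $a\to b$ is thin if $\theta(a)=b$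 and $\theta(b)=a$. The thin arcs form a matching (no two share an endpoint). For a matching $M$ with endpoint set $V(M)$, $\mathrm{Join}(H,M)$ has a vertex $(u,u)$ for each $u\notin V(M)$ and a vertex $(a,b)$ for each $a\to b\in M$, with $(a,b)\to(x,y)$ an arc iff $a\to y\in E(H)$. $\mathrm{Join}(H)$ denotes $\mathrm{Join}(H,M)$ for $M$ the set of thin arcs of $H$. *)

theory Defs
  imports Main
begin

definition digraph :: "'a set \<Rightarrow> ('a \<times> 'a) set \<Rightarrow> bool" where
  "digraph V E \<longleftrightarrow> finite V \<and> E \<subseteq> V \<times> V"

definition out_nbrs :: "('a \<times> 'a) set \<Rightarrow> 'a \<Rightarrow> 'a set" where
  "out_nbrs E v = {y. (v, y) \<in> E}"

definition in_nbrs :: "('a \<times> 'a) set \<Rightarrow> 'a \<Rightarrow> 'a set" where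
  "in_nbrs E v = {x. (x, v) \<in> E}"

definition nbrs :: "('a \<times> 'a) set \<Rightarrow> 'a \<Rightarrow> 'a set" where
  "nbrs E v = out_nbrs E v \<union> in_nbrs E v"

definition deg :: "('a \<times> 'a) set \<Rightarrow> 'a \<Rightarrow> nat" where
  "deg E v = card (nbrs E v)"

definition disimplicial :: "('a \<times> 'a) set \<Rightarrow> 'a \<Rightarrow> 'a \<Rightarrow> bool" where
  "disimplicial E v w \<longleftrightarrow> (v, w) \<in> E \<and>
     (\<forall>x \<in> in_nbrs E w. \<forall>y \<in> out_nbrs E v. (x, y) \<in> E)"

definition transitive_vertex :: "('a \<times> 'a) set \<Rightarrow> 'a \<Rightarrow> bool" where
  "transitive_vertex E u \<longleftrightarrow> (\<forall>x \<in> in_nbrs E u. \<forall>y \<in> out_nbrs E u. (x, y) \<in> E)"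

datatype 'a split_vertex = Out 'a | In 'a

definition split_V :: "'a set \<Rightarrow> ('a \<times> 'a) set \<Rightarrow> 'a split_vertex set" where
  "split_V V E = {Out v | v. v \<in> V \<and> out_nbrs E v \<noteq> {}} \<union> {In w | w. w \<in> V \<and> in_nbrs E w \<noteq> {}}"

definition split_E :: "('a \<times> 'a) set \<Rightarrow> ('a split_vertex \<times> 'a split_vertex) set" where
  "split_E E = {(Out v, In w) | v w. (v, w) \<in> E}"

definition is_repr :: "'b set \<Rightarrow> ('b \<times> 'b) set \<Rightarrow> ('b \<Rightarrow> 'b) \<Rightarrow> bool" where
  "is_repr V E r \<longleftrightarrow>
     (\<forall>u \<in> V. r u \<in> V \<and> nbrs E (r u) = nbrs E u) \<and>
     (\<forall>u \<in> V. \<forall>u' \<in> V. nbrs E u = nbrs E u' \<longrightarrow> r u = r u')"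

definition Repr_V :: "'b set \<Rightarrow> ('b \<Rightarrow> 'b) \<Rightarrow> 'b set" where
  "Repr_V V r = r ` V"

definition Repr_E :: "'b set \<Rightarrow> ('b \<times> 'b) set \<Rightarrow> ('b \<Rightarrow> 'b) \<Rightarrow> ('b \<times> 'b) set" where
  "Repr_E V E r = E \<inter> (r ` V \<times> r ` V)"

definition is_thin_nbr :: "('b \<times> 'b) set \<Rightarrow> 'b \<Rightarrow> 'b \<Rightarrow> bool" where
  "is_thin_nbr E u x \<longleftrightarrow> x \<in> nbrs E u \<and> (\<forall>z \<in> nbrs E u - {x}. deg E x < deg E z)"

definition thin_arcs :: "('b \<times> 'b) set \<Rightarrow> ('b \<times> 'b) set" where
  "thin_arcs E = {(a, b). (a, b) \<in> E \<and> is_thin_nbr E a b \<and> is_thin_nbr E b a}"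

definition matching_vertices :: "('b \<times> 'b) set \<Rightarrow> 'b set" where
  "matching_vertices M = fst ` M \<union> snd ` M"

definition Join_V :: "'b set \<Rightarrow> ('b \<times> 'b) set \<Rightarrow> ('b \<times> 'b) set" where
  "Join_V V M = {(u, u) | u. u \<in> V \<and> u \<notin> matching_vertices M} \<union> M"

definition Join_E :: "'b set \<Rightarrow> ('b \<times> 'b) set \<Rightarrow> ('b \<times> 'b) set \<Rightarrow> (('b \<times> 'b) \<times> ('b \<times> 'b)) set" where
  "Join_E V E M = {((a, b), (x, y)) | a b x y.
      (a, b) \<in> Join_V V M \<and> (x, y) \<in> Join_V V M \<and> (a, y) \<in> E}"

end

theory Submission
  imports Defs
begin

text \<open>Disimpliciality depends on neighbourhoods only, and twins of the ST graph Split(G) share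
  their arcs, so v \<rightarrow> w is disimplicial in G iff the arc a \<rightarrow> b between the representatives
  of out(v) and in(w) is disimplicial in the twin-free ST graph H = Repr(Split(G)).
  A disimplicial arc of H is thin: every other neighbour of a has a neighbourhood containing
  that of b, strictly because H is twin-free, and symmetrically. Finally the in-arcs of the
  join vertex (a, b) come from all in-neighbours of b and its out-arcs go to all out-neighbours
  of a, so transitivity of (a, b) in Join(H) is exactly disimpliciality of a \<rightarrow> b.\<close>

definition ST_graph :: "'b set \<Rightarrow> ('b \<times> 'b) set \<Rightarrow> bool" where
  "ST_graph V E \<longleftrightarrow> (\<forall>u \<in> V. in_nbrs E u = {} \<or> out_nbrs E u = {})"

definition twin_free :: "'b set \<Rightarrow> ('b \<times> 'b) set \<Rightarrow> bool" where
  "twin_free V E \<longleftrightarrow> (\<forall>u \<in> V. \<forall>u' \<in> V. nbrs E u = nbrs E u' \<longrightarrow> u = u')"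

lemma mem_nbrs_iff: "x \<in> nbrs E u \<longleftrightarrow> (u, x) \<in> E \<or> (x, u) \<in> E"
  by (auto simp: nbrs_def out_nbrs_def in_nbrs_def)

lemma mem_nbrs_sym: "x \<in> nbrs E u \<longleftrightarrow> u \<in> nbrs E x"
  by (auto simp: mem_nbrs_iff)

lemma finite_nbrs: "finite E \<Longrightarrow> finite (nbrs E u)"
proof -
  assume "finite E"
  moreover have "nbrs E u \<subseteq> fst ` E \<union> snd ` E"
    by (force simp: mem_nbrs_iff)
  ultimately show ?thesis
    by (meson finite_Un finite_imageI finite_subset)
qed

lemma ST_graph_subgraph:
  assumes "ST_graph V E" "V' \<subseteq> V" "E' \<subseteq> E"
  shows "ST_graph V' E'"
  using assms unfolding ST_graph_def in_nbrs_def out_nbrs_def by blast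

lemma ST_graph_no_two_path:
  assumes "ST_graph V E" "E \<subseteq> V \<times> V" "(u, x) \<in> E" "(x, y) \<in> E"
  shows False
proof -
  have "x \<in> V" using assms(2,3) by blast
  with assms show False by (auto simp: ST_graph_def in_nbrs_def out_nbrs_def)
qed

text \<open>A common neighbour z of twins is a source or a sink, which fixes the direction of both
  arcs, so twins in an ST graph share their arcs and not only their neighbours.\<close>

lemma ST_graph_twin_arcs:
  assumes ST: "ST_graph V E" "E \<subseteq> V \<times> V" and twins: "nbrs E u = nbrs E u'"
  shows "(u, z) \<in> E \<longleftrightarrow> (u', z) \<in> E" and "(z, u) \<in> E \<longleftrightarrow> (z, u') \<in> E"
proof -
  have out: "(b, z) \<in> E" if "(a, z) \<in> E" "nbrs E a = nbrs E b" for a b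
    using that ST_graph_no_two_path[OF ST] by (metis mem_nbrs_iff)
  have "in": "(z, b) \<in> E" if "(z, a) \<in> E" "nbrs E a = nbrs E b" for a b
    using that ST_graph_no_two_path[OF ST] by (metis mem_nbrs_iff)
  show "(u, z) \<in> E \<longleftrightarrow> (u', z) \<in> E" using out twins by metis
  show "(z, u) \<in> E \<longleftrightarrow> (z, u') \<in> E" using "in" twins by metis
qed

lemma is_repr_mem: "is_repr V E r \<Longrightarrow> u \<in> V \<Longrightarrow> r u \<in> V"
  unfolding is_repr_def by blast

lemma is_repr_nbrs: "is_repr V E r \<Longrightarrow> u \<in> V \<Longrightarrow> nbrs E (r u) = nbrs E u"
  unfolding is_repr_def by blast

lemma is_repr_eq:
  "is_repr V E r \<Longrightarrow> u \<in> V \<Longrightarrow> u' \<in> V \<Longrightarrow> nbrs E u = nbrs E u' \<Longrightarrow> r u = r u'"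
  unfolding is_repr_def by blast

lemma is_repr_idem:
  assumes R: "is_repr V E r" and "u \<in> r ` V"
  shows "r u = u"
proof -
  obtain x where x: "x \<in> V" "u = r x" using assms(2) by blast
  then show ?thesis
    using is_repr_eq[OF R is_repr_mem[OF R x(1)] x(1) is_repr_nbrs[OF R x(1)]] by simp
qed

lemma nbrs_Repr_E: "u \<in> r ` V \<Longrightarrow> nbrs (Repr_E V E r) u = nbrs E u \<inter> r ` V"
  by (auto simp: Repr_E_def mem_nbrs_iff)

text \<open>A neighbour z of a representative u may be replaced by its own representative, since
  u is a neighbour of z and hence of its twin r z.\<close>

lemma twin_free_Repr:
  assumes R: "is_repr V E r" and E: "E \<subseteq> V \<times> V"
  shows "twin_free (Repr_V V r) (Repr_E V E r)"
  unfolding twin_free_def Repr_V_def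
proof (intro ballI impI)
  fix u u' assume u: "u \<in> r ` V" and u': "u' \<in> r ` V"
    and eq: "nbrs (Repr_E V E r) u = nbrs (Repr_E V E r) u'"
  have dominated: "nbrs E a \<subseteq> nbrs E b"
    if a: "a \<in> r ` V" and b: "b \<in> r ` V"
      and eq: "nbrs (Repr_E V E r) a = nbrs (Repr_E V E r) b" for a b
  proof
    fix z assume z: "z \<in> nbrs E a"
    then have "z \<in> V" using E by (auto simp: mem_nbrs_iff)
    with z have "r z \<in> nbrs E a"
      using is_repr_nbrs[OF R] by (metis mem_nbrs_sym)
    then have "r z \<in> nbrs E b"
      using eq \<open>z \<in> V\<close> unfolding nbrs_Repr_E[OF a] nbrs_Repr_E[OF b] by blast
    then show "z \<in> nbrs E b"
      using is_repr_nbrs[OF R \<open>z \<in> V\<close>] by (metis mem_nbrs_sym)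
  qed
  have "nbrs E u = nbrs E u'"
    using dominated[OF u u' eq] dominated[OF u' u eq[symmetric]] by (rule subset_antisym)
  then have "r u = r u'"
    using u u' is_repr_mem[OF R] is_repr_eq[OF R] by blast
  then show "u = u'" using is_repr_idem[OF R u] is_repr_idem[OF R u'] by simp
qed

lemma ST_graph_repr_arc_iff:
  assumes "ST_graph V E" "E \<subseteq> V \<times> V" "is_repr V E r" "a \<in> V" "b \<in> V"
  shows "(r a, r b) \<in> E \<longleftrightarrow> (a, b) \<in> E"
  using ST_graph_twin_arcs(1)[OF assms(1,2) is_repr_nbrs[OF assms(3,4)]]
    ST_graph_twin_arcs(2)[OF assms(1,2) is_repr_nbrs[OF assms(3,5)]] by simp

lemma ST_graph_Repr_E_arc_iff:
  assumes "ST_graph V E" "E \<subseteq> V \<times> V" "is_repr V E r" "a \<in> V" "b \<in> V"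
  shows "(r a, r b) \<in> Repr_E V E r \<longleftrightarrow> (a, b) \<in> E"
  using ST_graph_repr_arc_iff[OF assms] assms(4,5) by (simp add: Repr_E_def)

lemma ST_graph_disimplicial_Repr_iff:
  assumes ST: "ST_graph V E" "E \<subseteq> V \<times> V" and R: "is_repr V E r" and "u \<in> V" "z \<in> V"
  shows "disimplicial (Repr_E V E r) (r u) (r z) \<longleftrightarrow> disimplicial E u z"
proof -
  note arc = ST_graph_Repr_E_arc_iff[OF ST R]
  have "in_nbrs (Repr_E V E r) (r z) = r ` in_nbrs E z"
    using ST(2) \<open>z \<in> V\<close> by (force simp: in_nbrs_def Repr_E_def arc[symmetric])
  moreover have "out_nbrs (Repr_E V E r) (r u) = r ` out_nbrs E u"
    using ST(2) \<open>u \<in> V\<close> by (force simp: out_nbrs_def Repr_E_def arc[symmetric])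
  moreover have "in_nbrs E z \<subseteq> V" "out_nbrs E u \<subseteq> V"
    using ST(2) by (auto simp: in_nbrs_def out_nbrs_def)
  ultimately show ?thesis
    using \<open>u \<in> V\<close> \<open>z \<in> V\<close> by (auto simp: disimplicial_def arc subset_iff)
qed

lemma split_E_subset: "digraph V E \<Longrightarrow> split_E E \<subseteq> split_V V E \<times> split_V V E"
  by (auto simp: digraph_def split_E_def split_V_def in_nbrs_def out_nbrs_def)

lemma finite_split_V: "digraph V E \<Longrightarrow> finite (split_V V E)"
proof -
  assume "digraph V E"
  then have "finite (Out ` V \<union> In ` V)" by (simp add: digraph_def)
  moreover have "split_V V E \<subseteq> Out ` V \<union> In ` V" by (auto simp: split_V_def)
  ultimately show ?thesis by (rule finite_subset[rotated])
qed

lemma ST_graph_split: "ST_graph (split_V V E) (split_E E)"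
  by (auto simp: ST_graph_def split_E_def in_nbrs_def out_nbrs_def split_V_def)

lemma disimplicial_split_iff: "disimplicial (split_E E) (Out v) (In w) \<longleftrightarrow> disimplicial E v w"
  by (auto simp: disimplicial_def split_E_def in_nbrs_def out_nbrs_def)

lemma Join_V_source:
  assumes "M \<subseteq> E" "u \<in> V" "in_nbrs E u = {}"
  shows "\<exists>q. (u, q) \<in> Join_V V M"
proof (cases "u \<in> matching_vertices M")
  case True
  with assms have "u \<in> fst ` M" by (force simp: matching_vertices_def in_nbrs_def)
  then show ?thesis by (force simp: Join_V_def)
next
  case False
  with assms(2) show ?thesis by (auto simp: Join_V_def)
qed

lemma Join_V_sink:
  assumes "M \<subseteq> E" "u \<in> V" "out_nbrs E u = {}"
  shows "\<exists>p. (p, u) \<in> Join_V V M"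
proof (cases "u \<in> matching_vertices M")
  case True
  with assms have "u \<in> snd ` M" by (force simp: matching_vertices_def out_nbrs_def)
  then show ?thesis by (force simp: Join_V_def)
next
  case False
  with assms(2) show ?thesis by (auto simp: Join_V_def)
qed

text \<open>In an ST graph every tail of an arc is a source, hence the first component of some vertex
  of the join, and every head is the second component of one; so the arcs of the join around
  (a, b) range over all arcs into b and out of a.\<close>

lemma ST_graph_transitive_Join_iff:
  assumes ST: "ST_graph V E" "E \<subseteq> V \<times> V" and "M \<subseteq> E"
    and ab: "(a, b) \<in> Join_V V M" "(a, b) \<in> E"
  shows "transitive_vertex (Join_E V E M) (a, b) \<longleftrightarrow> disimplicial E a b"
proof -
  have tail: "\<exists>q. (p, q) \<in> Join_V V M" if "(p, y) \<in> E" for p y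
  proof (rule Join_V_source[OF \<open>M \<subseteq> E\<close>])
    show "p \<in> V" using that ST(2) by blast
    then show "in_nbrs E p = {}" using that ST(1) by (auto simp: ST_graph_def out_nbrs_def)
  qed
  have head: "\<exists>x. (x, y) \<in> Join_V V M" if "(p, y) \<in> E" for p y
  proof (rule Join_V_sink[OF \<open>M \<subseteq> E\<close>])
    show "y \<in> V" using that ST(2) by blast
    then show "out_nbrs E y = {}" using that ST(1) by (auto simp: ST_graph_def in_nbrs_def)
  qed
  have "transitive_vertex (Join_E V E M) (a, b) \<longleftrightarrow>
      (\<forall>p q x y. (p, q) \<in> Join_V V M \<longrightarrow> (x, y) \<in> Join_V V M \<longrightarrow>
        (p, b) \<in> E \<longrightarrow> (a, y) \<in> E \<longrightarrow> (p, y) \<in> E)"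
    using ab(1) by (auto simp: transitive_vertex_def Join_E_def in_nbrs_def out_nbrs_def)
  also have "\<dots> \<longleftrightarrow> disimplicial E a b"
    using ab(2) tail head by (simp add: disimplicial_def in_nbrs_def out_nbrs_def) blast
  finally show ?thesis .
qed

lemma is_thin_nbr_if_dominated:
  assumes "finite E" "E \<subseteq> V \<times> V" "twin_free V E" "b \<in> nbrs E a"
    and dominated: "\<And>z. z \<in> nbrs E a \<Longrightarrow> nbrs E b \<subseteq> nbrs E z"
  shows "is_thin_nbr E a b"
  unfolding is_thin_nbr_def
proof (intro conjI ballI)
  fix z assume z: "z \<in> nbrs E a - {b}"
  have "z \<in> V" "b \<in> V" using z assms(2,4) by (auto simp: mem_nbrs_iff)
  with z \<open>twin_free V E\<close> have "nbrs E b \<noteq> nbrs E z" by (auto simp: twin_free_def)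
  with dominated z have "nbrs E b \<subset> nbrs E z" by blast
  then show "deg E b < deg E z"
    unfolding deg_def by (rule psubset_card_mono[OF finite_nbrs[OF \<open>finite E\<close>]])
qed (fact \<open>b \<in> nbrs E a\<close>)

lemma ST_graph_disimplicial_imp_thin_arc:
  assumes ST: "ST_graph V E" "E \<subseteq> V \<times> V" and "finite E" "twin_free V E"
    and dis: "disimplicial E a b"
  shows "(a, b) \<in> thin_arcs E"
proof -
  have ab: "(a, b) \<in> E" using dis by (simp add: disimplicial_def)
  then have "nbrs E a = out_nbrs E a" "nbrs E b = in_nbrs E b"
    using ST by (auto simp: ST_graph_def nbrs_def in_nbrs_def out_nbrs_def)
  then have "is_thin_nbr E a b" "is_thin_nbr E b a"
    using dis ab by (auto intro!: is_thin_nbr_if_dominated[OF \<open>finite E\<close> ST(2) \<open>twin_free V E\<close>]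
        simp: disimplicial_def mem_nbrs_iff in_nbrs_def out_nbrs_def)
  with ab show ?thesis by (simp add: thin_arcs_def)
qed

lemma ST_graph_disimplicial_iff_Join:
  assumes ST: "ST_graph V E" "E \<subseteq> V \<times> V" and "finite E" "twin_free V E" and ab: "(a, b) \<in> E"
  shows "disimplicial E a b \<longleftrightarrow>
    (a, b) \<in> Join_V V (thin_arcs E) \<and> transitive_vertex (Join_E V E (thin_arcs E)) (a, b)"
proof -
  have "thin_arcs E \<subseteq> E" by (auto simp: thin_arcs_def)
  moreover have "(a, b) \<in> Join_V V (thin_arcs E)" if "disimplicial E a b"
    using ST_graph_disimplicial_imp_thin_arc[OF assms(1-4) that] by (simp add: Join_V_def)
  ultimately show ?thesis
    using ST_graph_transitive_Join_iff[OF ST _ _ ab] by blast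
qed

theorem theorem9:
  fixes V :: "'a set" and E :: "('a \<times> 'a) set"
    and r :: "'a split_vertex \<Rightarrow> 'a split_vertex"
    and v w :: 'a
  assumes "digraph V E"
    and "(v, w) \<in> E"
    and "is_repr (split_V V E) (split_E E) r"
  shows "disimplicial E v w \<longleftrightarrow>
    (let RV = Repr_V (split_V V E) r;
         RE = Repr_E (split_V V E) (split_E E) r;
         M = thin_arcs RE
     in (r (Out v), r (In w)) \<in> Join_V RV M \<and>
        transitive_vertex (Join_E RV RE M) (r (Out v), r (In w)))"
proof -
  define SV SE RV RE where "SV = split_V V E" and "SE = split_E E"
    and "RV = Repr_V SV r" and "RE = Repr_E SV SE r"
  note R = \<open>is_repr (split_V V E) (split_E E) r\<close>[folded SV_def SE_def]
  have ST: "ST_graph SV SE" "SE \<subseteq> SV \<times> SV"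
    using ST_graph_split split_E_subset[OF \<open>digraph V E\<close>] by (simp_all add: SV_def SE_def)
  have vw: "(Out v, In w) \<in> SE" "Out v \<in> SV" "In w \<in> SV"
    using \<open>(v, w) \<in> E\<close> ST(2) by (auto simp: SE_def split_E_def)
  have RE_sub: "RE \<subseteq> RV \<times> RV" "RV \<subseteq> SV" "RE \<subseteq> SE"
    using is_repr_mem[OF R] by (auto simp: RE_def RV_def Repr_E_def Repr_V_def)
  have "finite RE"
    using RE_sub finite_split_V[OF \<open>digraph V E\<close>] finite_subset
    by (metis SV_def finite_SigmaI)
  have "disimplicial E v w \<longleftrightarrow> disimplicial RE (r (Out v)) (r (In w))"
    using ST_graph_disimplicial_Repr_iff[OF ST R vw(2,3)]
    by (simp add: RE_def SE_def disimplicial_split_iff)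
  also have "\<dots> \<longleftrightarrow> (r (Out v), r (In w)) \<in> Join_V RV (thin_arcs RE) \<and>
      transitive_vertex (Join_E RV RE (thin_arcs RE)) (r (Out v), r (In w))"
  proof (rule ST_graph_disimplicial_iff_Join)
    show "ST_graph RV RE" using ST_graph_subgraph[OF ST(1)] RE_sub by blast
    show "twin_free RV RE" using twin_free_Repr[OF R ST(2)] by (simp add: RV_def RE_def)
    show "(r (Out v), r (In w)) \<in> RE"
      using ST_graph_Repr_E_arc_iff[OF ST R vw(2,3)] vw(1) by (simp add: RE_def)
  qed fact+
  finally show ?thesis unfolding Let_def RV_def RE_def SV_def SE_def .
qed

end
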